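(* Let $W$ be a standard Brownian motion with respect to $\mathbb F$, $W_0=0$, and consider the case without hedging instruments ($S\equiv1$), so that $u_A(\tau,\sigma)=E[-\exp(-\alpha_A(C_A-R(\tau,\sigma)))]$ and $u_B(\tau,\sigma)=E[-\exp(-\alpha_B(C_B+R(\tau,\sigma)))]$. Let $X_t=W_t+\mu t$ and $Y_t=W_t+\mu t+\delta$, $t\in[0,T]$, with $\mu,\delta\ge0$, and assume $\alpha_B/2<\mu<\alpha_A/2$, $0<\delta<(\alpha_A/2+\mu)T$ and $C_B=0$. Then: (a) for every $\sigma\in\mathcal T_0$, $\tau\equiv T$ maximizes $\tau\mapsto u_B(\tau,\sigma)$ over $\mathcal T_0$; (b) if $C_A=0$, then $\sigma\equiv0$ maximizes $\sigma\mapsto u_A(T,\sigma)$ over $\mathcal T_0$; (c) if $C_A=W_T+\mu T$, then $\sigma\equiv T$ maximizes $\sigma\mapsto u_A(T,\sigma)$ over $\mathcal T_0$.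
   Context: $(\Omega,\mathcal F,\mathbb F=(\mathcal F_t)_{t\in[0,T]},P)$ is a filtered probability space with $T\in(0,\infty)$ satisfying the usual conditions; $\mathcal T_0$ is the set of $[0,T]$-valued stopping times. $\alpha_A,\alpha_B>0$ are the risk aversions of the seller $A$ and buyer $B$, and $R(\tau,\sigma):=X_\tau\mathbf 1_{\{\tau\le\sigma\}}+Y_\sigma\mathbf 1_{\{\sigma<\tau\}}$ is the payoff paid by $A$ to $B$ when $B$ chooses $\tau$ and $A$ chooses $\sigma$. *)

theory Defs
  imports "HOL-Probability.Probability"
begin

definition filtered_prob_space_usual ::
  "'a measure \<Rightarrow> (real \<Rightarrow> 'a measure) \<Rightarrow> real \<Rightarrow> bool" where
  "filtered_prob_space_usual M F T \<longleftrightarrow>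
     prob_space M \<and> 0 < T \<and>
     (\<forall>t\<in>{0..T}. space (F t) = space M \<and> sets (F t) \<subseteq> sets M) \<and>
     (\<forall>s\<in>{0..T}. \<forall>t\<in>{0..T}. s \<le> t \<longrightarrow> sets (F s) \<subseteq> sets (F t)) \<and>
     \<comment> \<open>completeness: F_0 contains all P-null sets\<close>
     (\<forall>A. A \<subseteq> space M \<and> (\<exists>N\<in>sets M. A \<subseteq> N \<and> emeasure M N = 0) \<longrightarrow> A \<in> sets (F 0)) \<and>
     \<comment> \<open>right-continuity on [0,T)\<close>
     (\<forall>t\<in>{0..<T}. sets (F t) = (\<Inter>s\<in>{t<..T}. sets (F s)))"

definition stopping_times_0 :: "'a measure \<Rightarrow> (real \<Rightarrow> 'a measure) \<Rightarrow> real \<Rightarrow> ('a \<Rightarrow> real) set" where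
  "stopping_times_0 M F T =
     {\<tau>. (\<forall>\<omega>\<in>space M. \<tau> \<omega> \<in> {0..T}) \<and>
          (\<forall>t\<in>{0..T}. {\<omega>\<in>space M. \<tau> \<omega> \<le> t} \<in> sets (F t))}"

definition std_brownian_motion ::
  "'a measure \<Rightarrow> (real \<Rightarrow> 'a measure) \<Rightarrow> real \<Rightarrow> (real \<Rightarrow> 'a \<Rightarrow> real) \<Rightarrow> bool" where
  "std_brownian_motion M F T W \<longleftrightarrow>
     (\<forall>\<omega>\<in>space M. W 0 \<omega> = 0) \<and>
     (\<forall>\<omega>\<in>space M. continuous_on {0..T} (\<lambda>t. W t \<omega>)) \<and>
     (\<forall>t\<in>{0..T}. W t \<in> borel_measurable (F t)) \<and>
     (\<forall>s t. 0 \<le> s \<and> s < t \<and> t \<le> T \<longrightarrow>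
        distributed M lborel (\<lambda>\<omega>. W t \<omega> - W s \<omega>) (normal_density 0 (sqrt (t - s))) \<and>
        (\<forall>A\<in>sets (F s). \<forall>B\<in>sets borel.
           measure M ({\<omega>\<in>space M. W t \<omega> - W s \<omega> \<in> B} \<inter> A)
             = measure M {\<omega>\<in>space M. W t \<omega> - W s \<omega> \<in> B} * measure M A))"

definition payoff ::
  "(real \<Rightarrow> 'a \<Rightarrow> real) \<Rightarrow> (real \<Rightarrow> 'a \<Rightarrow> real) \<Rightarrow> ('a \<Rightarrow> real) \<Rightarrow> ('a \<Rightarrow> real) \<Rightarrow> 'a \<Rightarrow> real" where
  "payoff X Y \<tau> \<sigma> \<omega> = (if \<tau> \<omega> \<le> \<sigma> \<omega> then X (\<tau> \<omega>) \<omega> else Y (\<sigma> \<omega>) \<omega>)"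

text \<open>Expected exponential utilities (with S = 1), taking values in the extended
  reals: E[-exp(Z)] = - E[exp(Z)], the latter a nonnegative (possibly infinite)
  integral.\<close>

definition util_A ::
  "'a measure \<Rightarrow> real \<Rightarrow> ('a \<Rightarrow> real) \<Rightarrow> (real \<Rightarrow> 'a \<Rightarrow> real) \<Rightarrow> (real \<Rightarrow> 'a \<Rightarrow> real)
    \<Rightarrow> ('a \<Rightarrow> real) \<Rightarrow> ('a \<Rightarrow> real) \<Rightarrow> ereal" where
  "util_A M \<alpha> C X Y \<tau> \<sigma> =
     - enn2ereal (\<integral>\<^sup>+ \<omega>. ennreal (exp (- \<alpha> * (C \<omega> - payoff X Y \<tau> \<sigma> \<omega>))) \<partial>M)"

definition util_B ::
  "'a measure \<Rightarrow> real \<Rightarrow> ('a \<Rightarrow> real) \<Rightarrow> (real \<Rightarrow> 'a \<Rightarrow> real) \<Rightarrow> (real \<Rightarrow> 'a \<Rightarrow> real)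
    \<Rightarrow> ('a \<Rightarrow> real) \<Rightarrow> ('a \<Rightarrow> real) \<Rightarrow> ereal" where
  "util_B M \<alpha> C X Y \<tau> \<sigma> =
     - enn2ereal (\<integral>\<^sup>+ \<omega>. ennreal (exp (- \<alpha> * (C \<omega> + payoff X Y \<tau> \<sigma> \<omega>))) \<partial>M)"

end

theory Submission
  imports Defs
begin

text \<open>
  For real \<open>\<theta>\<close>, \<open>N t = exp (\<theta> W t - \<theta>^2 t / 2)\<close> is a martingale, and optional stopping holds
  in the form \<open>E[g N T] = E[g N \<tau>]\<close> for every stopping time \<open>\<tau> \<le> T\<close> and every nonnegative
  \<open>F \<tau>\<close>-measurable \<open>g\<close>: for the dyadic upper approximations of \<open>\<tau>\<close> this is a finite sum of
  martingale identities, the passage to the limit is justified by an \<open>L^2\<close> bound (coming from the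
  martingale with parameter \<open>2 \<theta>\<close>), and unbounded \<open>g\<close> are reached by truncation.

  All three claims reduce to this identity. Since \<open>exp (- \<alpha>B X t) = N t exp (- k t)\<close> for
  \<open>\<theta> = - \<alpha>B\<close> and \<open>k = \<alpha>B \<mu> - \<alpha>B^2 / 2 > 0\<close>, the buyer's expected loss can only decrease by
  waiting until \<open>T\<close>. For the unhedged seller, \<open>exp (\<alpha>A R(T,\<sigma>)) \<ge> exp (\<alpha>A \<delta>) N \<sigma>\<close> for
  \<open>\<theta> = \<alpha>A\<close> (by \<open>\<mu> \<ge> 0\<close>, and by the bound on \<open>\<delta>\<close> when \<open>\<sigma> = T\<close>), and the right-hand side has
  mean \<open>exp (\<alpha>A \<delta>)\<close>, the loss of stopping at once. For the hedged seller the loss on \<open>{\<sigma> < T}\<close>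
  is an \<open>F \<sigma>\<close>-measurable weight times \<open>N T\<close> for \<open>\<theta> = - \<alpha>A\<close>; replacing \<open>N T\<close> by \<open>N \<sigma>\<close> shows
  that its mean is at least \<open>P(\<sigma> < T)\<close> because \<open>\<mu> < \<alpha>A / 2\<close>, whereas stopping at \<open>T\<close> has loss \<open>1\<close>.
\<close>

lemma tendsto_min_of_nat: "(\<lambda>k::nat. min a (real k)) \<longlonglongrightarrow> a"
proof (rule tendsto_eventually)
  show "\<forall>\<^sub>F k in sequentially. min a (real k) = a"
    using eventually_ge_at_top[of "nat \<lceil>a\<rceil>"] by eventually_elim linarith
qed

lemma nn_integral_normal_density_mult_exp:
  assumes "0 < \<sigma>"
  shows "(\<integral>\<^sup>+x. ennreal (normal_density 0 \<sigma> x) * ennreal (exp (\<theta> * x)) \<partial>lborel)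
    = ennreal (exp (\<theta>\<^sup>2 * \<sigma>\<^sup>2 / 2))"
proof -
  \<comment> \<open>completing the square turns the integrand into a shifted normal density\<close>
  have shift: "ennreal (normal_density 0 \<sigma> x) * ennreal (exp (\<theta> * x))
      = ennreal (exp (\<theta>\<^sup>2 * \<sigma>\<^sup>2 / 2)) * ennreal (normal_density (\<theta> * \<sigma>\<^sup>2) \<sigma> x)" for x
  proof -
    have "normal_density 0 \<sigma> x * exp (\<theta> * x) = exp (\<theta>\<^sup>2 * \<sigma>\<^sup>2 / 2) * normal_density (\<theta> * \<sigma>\<^sup>2) \<sigma> x"
      unfolding normal_density_def using assms
      by (simp add: field_simps power2_eq_square exp_add[symmetric] exp_diff[symmetric])
    then show ?thesis by (simp add: ennreal_mult[symmetric])
  qed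
  have "(\<integral>\<^sup>+x. ennreal (normal_density (\<theta> * \<sigma>\<^sup>2) \<sigma> x) \<partial>lborel) = 1"
    using assms by (subst nn_integral_eq_integral) auto
  then show ?thesis unfolding shift by (subst nn_integral_cmult) auto
qed

lemma nn_integral_le_truncation_add:
  fixes f :: "'a \<Rightarrow> real"
  assumes [measurable]: "f \<in> borel_measurable M"
    and nonneg: "\<And>\<omega>. \<omega> \<in> space M \<Longrightarrow> 0 \<le> f \<omega>" and K: "0 < K"
  shows "(\<integral>\<^sup>+\<omega>. ennreal (f \<omega>) \<partial>M)
    \<le> (\<integral>\<^sup>+\<omega>. ennreal (min (f \<omega>) K) \<partial>M) + ennreal (1 / K) * (\<integral>\<^sup>+\<omega>. ennreal ((f \<omega>)\<^sup>2) \<partial>M)"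
proof -
  have "ennreal (f \<omega>) \<le> ennreal (min (f \<omega>) K) + ennreal (1 / K) * ennreal ((f \<omega>)\<^sup>2)"
    if "\<omega> \<in> space M" for \<omega>
  proof -
    have "f \<omega> \<le> min (f \<omega>) K + (1 / K) * (f \<omega>)\<^sup>2"
    proof (cases "f \<omega> \<le> K")
      case False
      then have "K * f \<omega> \<le> f \<omega> * f \<omega>" using K by (intro mult_right_mono) auto
      then have "f \<omega> \<le> (1 / K) * (f \<omega>)\<^sup>2" using K by (simp add: field_simps power2_eq_square)
      then show ?thesis using False K by simp
    qed (use K in simp)
    then have "ennreal (f \<omega>) \<le> ennreal (min (f \<omega>) K + (1 / K) * (f \<omega>)\<^sup>2)"
      by (rule ennreal_leI)
    also have "\<dots> = ennreal (min (f \<omega>) K) + ennreal (1 / K) * ennreal ((f \<omega>)\<^sup>2)"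
      using K nonneg[OF that] by (simp add: ennreal_plus ennreal_mult[symmetric])
    finally show ?thesis .
  qed
  then have "(\<integral>\<^sup>+\<omega>. ennreal (f \<omega>) \<partial>M)
      \<le> (\<integral>\<^sup>+\<omega>. ennreal (min (f \<omega>) K) + ennreal (1 / K) * ennreal ((f \<omega>)\<^sup>2) \<partial>M)"
    by (intro nn_integral_mono)
  also have "\<dots> = (\<integral>\<^sup>+\<omega>. ennreal (min (f \<omega>) K) \<partial>M) + ennreal (1 / K) * (\<integral>\<^sup>+\<omega>. ennreal ((f \<omega>)\<^sup>2) \<partial>M)"
    by (simp add: nn_integral_add nn_integral_cmult)
  finally show ?thesis .
qed

lemma (in prob_space) nn_integral_eq_of_tendsto_L2_bounded:
  fixes f :: "nat \<Rightarrow> 'a \<Rightarrow> real"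
  assumes [measurable]: "\<And>n. f n \<in> borel_measurable M" "g \<in> borel_measurable M"
    and nonneg: "\<And>n \<omega>. \<omega> \<in> space M \<Longrightarrow> 0 \<le> f n \<omega>"
    and lim: "\<And>\<omega>. \<omega> \<in> space M \<Longrightarrow> (\<lambda>n. f n \<omega>) \<longlonglongrightarrow> g \<omega>"
    and L2: "\<And>n. (\<integral>\<^sup>+\<omega>. ennreal ((f n \<omega>)\<^sup>2) \<partial>M) \<le> ennreal C"
    and const: "\<And>n. (\<integral>\<^sup>+\<omega>. ennreal (f n \<omega>) \<partial>M) = L"
  shows "(\<integral>\<^sup>+\<omega>. ennreal (g \<omega>) \<partial>M) = L"
proof (rule antisym)
  have "(\<integral>\<^sup>+\<omega>. ennreal (g \<omega>) \<partial>M) = (\<integral>\<^sup>+\<omega>. liminf (\<lambda>n. ennreal (f n \<omega>)) \<partial>M)"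
    using lim by (intro nn_integral_cong lim_imp_Liminf[symmetric] tendsto_ennrealI) auto
  also have "\<dots> \<le> liminf (\<lambda>n. \<integral>\<^sup>+\<omega>. ennreal (f n \<omega>) \<partial>M)"
    by (intro nn_integral_liminf) measurable
  finally show "(\<integral>\<^sup>+\<omega>. ennreal (g \<omega>) \<partial>M) \<le> L" by (simp add: const Liminf_const)
next
  \<comment> \<open>the truncations at level \<open>K\<close> converge by dominated convergence and lose at most \<open>C / K\<close>\<close>
  have truncation: "L \<le> (\<integral>\<^sup>+\<omega>. ennreal (g \<omega>) \<partial>M) + ennreal (C / K)" if K: "0 < K" for K
  proof -
    have dom: "(\<lambda>n. \<integral>\<^sup>+\<omega>. ennreal (min (f n \<omega>) K) \<partial>M) \<longlonglongrightarrow> (\<integral>\<^sup>+\<omega>. ennreal (min (g \<omega>) K) \<partial>M)"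
    proof (rule nn_integral_dominated_convergence[where w="\<lambda>_. ennreal K"])
      show "AE \<omega> in M. (\<lambda>n. ennreal (min (f n \<omega>) K)) \<longlonglongrightarrow> ennreal (min (g \<omega>) K)"
        using lim by (auto intro!: tendsto_ennrealI tendsto_min)
    qed (auto simp: emeasure_space_1 intro!: ennreal_leI)
    have "L \<le> (\<integral>\<^sup>+\<omega>. ennreal (min (f n \<omega>) K) \<partial>M) + ennreal (C / K)" for n
    proof -
      have "L \<le> (\<integral>\<^sup>+\<omega>. ennreal (min (f n \<omega>) K) \<partial>M) + ennreal (1 / K) * ennreal C"
        unfolding const[of n, symmetric]
        using nn_integral_le_truncation_add[of "f n", OF _ nonneg K] L2[of n]
        by (meson add_left_mono mult_left_mono order.trans zero_le assms(1))
      also have "ennreal (1 / K) * ennreal C \<le> ennreal (C / K)"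
        using K by (cases "0 \<le> C") (auto simp: ennreal_mult[symmetric] ennreal_neg)
      finally show ?thesis by (simp add: add_left_mono)
    qed
    then have "L \<le> (\<integral>\<^sup>+\<omega>. ennreal (min (g \<omega>) K) \<partial>M) + ennreal (C / K)"
      by (intro LIMSEQ_le_const[OF tendsto_add[OF dom tendsto_const]]) auto
    also have "\<dots> \<le> (\<integral>\<^sup>+\<omega>. ennreal (g \<omega>) \<partial>M) + ennreal (C / K)"
      by (intro add_right_mono nn_integral_mono ennreal_leI) simp
    finally show ?thesis .
  qed
  show "L \<le> (\<integral>\<^sup>+\<omega>. ennreal (g \<omega>) \<partial>M)"
  proof (rule ennreal_le_epsilon)
    fix e :: real assume e: "0 < e"
    define K where "K = (\<bar>C\<bar> + 1) / e"
    have "C * e \<le> e + e * \<bar>C\<bar>"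
      using mult_right_mono[OF abs_ge_self[of C], of e] e by (smt (verit) mult.commute)
    then have "0 < K" "C / K \<le> e" using e by (auto simp: K_def field_simps)
    then show "L \<le> (\<integral>\<^sup>+\<omega>. ennreal (g \<omega>) \<partial>M) + ennreal e"
      using truncation by (meson add_left_mono ennreal_leI order.trans)
  qed
qed

lemma nn_integral_mono_decomposition:
  fixes a b c u v :: "'a \<Rightarrow> real"
  assumes [measurable]: "a \<in> borel_measurable M" "b \<in> borel_measurable M" "c \<in> borel_measurable M"
    and nonneg: "\<And>\<omega>. \<omega> \<in> space M \<Longrightarrow> 0 \<le> a \<omega> \<and> 0 \<le> b \<omega> \<and> 0 \<le> c \<omega>"
    and u: "\<And>\<omega>. \<omega> \<in> space M \<Longrightarrow> u \<omega> \<le> a \<omega> + b \<omega>"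
    and v: "\<And>\<omega>. \<omega> \<in> space M \<Longrightarrow> a \<omega> + c \<omega> \<le> v \<omega>"
    and eq: "(\<integral>\<^sup>+\<omega>. ennreal (b \<omega>) \<partial>M) = (\<integral>\<^sup>+\<omega>. ennreal (c \<omega>) \<partial>M)"
  shows "(\<integral>\<^sup>+\<omega>. ennreal (u \<omega>) \<partial>M) \<le> (\<integral>\<^sup>+\<omega>. ennreal (v \<omega>) \<partial>M)"
proof -
  have "(\<integral>\<^sup>+\<omega>. ennreal (u \<omega>) \<partial>M) \<le> (\<integral>\<^sup>+\<omega>. ennreal (a \<omega>) + ennreal (b \<omega>) \<partial>M)"
  proof (rule nn_integral_mono)
    fix \<omega> assume "\<omega> \<in> space M"
    then show "ennreal (u \<omega>) \<le> ennreal (a \<omega>) + ennreal (b \<omega>)"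
      using ennreal_leI[OF u] nonneg by (simp add: ennreal_plus)
  qed
  also have "\<dots> = (\<integral>\<^sup>+\<omega>. ennreal (a \<omega>) \<partial>M) + (\<integral>\<^sup>+\<omega>. ennreal (c \<omega>) \<partial>M)"
    unfolding eq[symmetric] by (rule nn_integral_add) measurable
  also have "\<dots> = (\<integral>\<^sup>+\<omega>. ennreal (a \<omega>) + ennreal (c \<omega>) \<partial>M)"
    by (rule nn_integral_add[symmetric]) measurable
  also have "\<dots> \<le> (\<integral>\<^sup>+\<omega>. ennreal (v \<omega>) \<partial>M)"
  proof (rule nn_integral_mono)
    fix \<omega> assume "\<omega> \<in> space M"
    then show "ennreal (a \<omega>) + ennreal (c \<omega>) \<le> ennreal (v \<omega>)"
      using ennreal_leI[OF v] nonneg by (simp add: ennreal_plus)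
  qed
  finally show ?thesis .
qed

section \<open>Dyadic approximation from above\<close>

definition dyadic_index :: "real \<Rightarrow> nat \<Rightarrow> real \<Rightarrow> nat" where
  "dyadic_index T n x = nat \<lceil>x * 2 ^ n / T\<rceil>"

definition dyadic_ceil :: "real \<Rightarrow> nat \<Rightarrow> real \<Rightarrow> real" where
  "dyadic_ceil T n x = real (dyadic_index T n x) * T / 2 ^ n"

lemma dyadic_ceil_ge:
  assumes "0 < T" shows "x \<le> dyadic_ceil T n x"
proof -
  have "x * 2 ^ n / T \<le> real (dyadic_index T n x)"
    unfolding dyadic_index_def by (rule real_nat_ceiling_ge)
  then show ?thesis
    using assms by (simp add: dyadic_ceil_def field_simps)
qed

lemma dyadic_ceil_le_add:
  assumes "0 < T" "0 \<le> x" shows "dyadic_ceil T n x \<le> x + T / 2 ^ n"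
proof -
  have "real (dyadic_index T n x) \<le> x * 2 ^ n / T + 1"
    using assms ceiling_correct[of "x * 2 ^ n / T"] by (simp add: dyadic_index_def)
  then show ?thesis
    using assms by (simp add: dyadic_ceil_def field_simps)
qed

lemma dyadic_index_le:
  assumes "0 < T" "x \<le> T" shows "dyadic_index T n x \<le> 2 ^ n"
proof -
  have "x * 2 ^ n / T \<le> of_int (2 ^ n)"
    using assms by (simp add: field_simps)
  then show ?thesis
    unfolding dyadic_index_def by (simp add: nat_le_iff ceiling_le)
qed

lemma dyadic_ceil_le:
  assumes "0 < T" "x \<le> T" shows "dyadic_ceil T n x \<le> T"
  using dyadic_index_le[OF assms, of n] assms(1)
  by (simp add: dyadic_ceil_def field_simps flip: of_nat_le_iff)

lemma dyadic_ceil_tendsto: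
  assumes "0 < T" "0 \<le> x" shows "(\<lambda>n. dyadic_ceil T n x) \<longlonglongrightarrow> x"
proof (rule real_tendsto_sandwich[OF _ _ tendsto_const])
  have "(\<lambda>n. x + T / 2 ^ n) \<longlonglongrightarrow> x + 0"
    by (intro tendsto_add tendsto_const LIMSEQ_divide_realpow_zero) auto
  then show "(\<lambda>n. x + T / 2 ^ n) \<longlonglongrightarrow> x" by simp
qed (use dyadic_ceil_ge dyadic_ceil_le_add assms in auto)

lemma measurable_dyadic_index[measurable]:
  "f \<in> borel_measurable G \<Longrightarrow> (\<lambda>\<omega>. dyadic_index T n (f \<omega>)) \<in> measurable G (count_space UNIV)"
  unfolding dyadic_index_def
  by (rule measurable_compose[OF measurable_compose[OF _ measurable_real_ceiling]]) auto

lemma borel_measurable_dyadic_ceil[measurable]: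
  "f \<in> borel_measurable G \<Longrightarrow> (\<lambda>\<omega>. dyadic_ceil T n (f \<omega>)) \<in> borel_measurable G"
  unfolding dyadic_ceil_def by (rule measurable_compose[OF measurable_dyadic_index]) auto

locale brownian_filtration =
  fixes M :: "'a measure" and F :: "real \<Rightarrow> 'a measure" and T :: real
    and W :: "real \<Rightarrow> 'a \<Rightarrow> real"
  assumes filtered: "filtered_prob_space_usual M F T"
    and brownian: "std_brownian_motion M F T W"

sublocale brownian_filtration \<subseteq> prob_space M
  using filtered by (simp add: filtered_prob_space_usual_def)

context brownian_filtration
begin

abbreviation stopping_times :: "('a \<Rightarrow> real) set" where
  "stopping_times \<equiv> stopping_times_0 M F T"

lemma T_pos: "0 < T"
  using filtered by (simp add: filtered_prob_space_usual_def)

lemma space_F: "0 \<le> t \<Longrightarrow> t \<le> T \<Longrightarrow> space (F t) = space M"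
  using filtered by (simp add: filtered_prob_space_usual_def)

lemma sets_F_mono: "0 \<le> s \<Longrightarrow> s \<le> t \<Longrightarrow> t \<le> T \<Longrightarrow> sets (F s) \<subseteq> sets (F t)"
  using filtered unfolding filtered_prob_space_usual_def by auto

lemma subalgebra_F: "0 \<le> t \<Longrightarrow> t \<le> T \<Longrightarrow> subalgebra M (F t)"
  using filtered by (simp add: filtered_prob_space_usual_def subalgebra_def)

lemma F_measurable_imp_measurable:
  "0 \<le> t \<Longrightarrow> t \<le> T \<Longrightarrow> f \<in> borel_measurable (F t) \<Longrightarrow> f \<in> borel_measurable M"
  by (rule measurable_from_subalg[OF subalgebra_F])

lemma F_measurable_mono:
  assumes "0 \<le> s" "s \<le> t" "t \<le> T" "f \<in> borel_measurable (F s)"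
  shows "f \<in> borel_measurable (F t)"
proof (rule measurable_from_subalg[OF _ assms(4)])
  show "subalgebra (F t) (F s)"
    using assms space_F[of s] space_F[of t] sets_F_mono[of s t] by (simp add: subalgebra_def)
qed

lemma W_zero: "\<omega> \<in> space M \<Longrightarrow> W 0 \<omega> = 0"
  using brownian by (simp add: std_brownian_motion_def)

lemma W_continuous: "\<omega> \<in> space M \<Longrightarrow> continuous_on {0..T} (\<lambda>t. W t \<omega>)"
  using brownian by (simp add: std_brownian_motion_def)

lemma W_F_measurable: "0 \<le> t \<Longrightarrow> t \<le> T \<Longrightarrow> W t \<in> borel_measurable (F t)"
  using brownian by (simp add: std_brownian_motion_def)

lemma W_measurable: "0 \<le> t \<Longrightarrow> t \<le> T \<Longrightarrow> W t \<in> borel_measurable M"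
  using W_F_measurable F_measurable_imp_measurable by blast

lemma W_increment_distributed:
  "0 \<le> s \<Longrightarrow> s < t \<Longrightarrow> t \<le> T \<Longrightarrow>
    distributed M lborel (\<lambda>\<omega>. W t \<omega> - W s \<omega>) (\<lambda>x. ennreal (normal_density 0 (sqrt (t - s)) x))"
  using brownian by (simp add: std_brownian_motion_def)

lemma W_increment_indep:
  "0 \<le> s \<Longrightarrow> s < t \<Longrightarrow> t \<le> T \<Longrightarrow> A \<in> sets (F s) \<Longrightarrow> B \<in> sets borel \<Longrightarrow>
    prob ({\<omega>\<in>space M. W t \<omega> - W s \<omega> \<in> B} \<inter> A) = prob {\<omega>\<in>space M. W t \<omega> - W s \<omega> \<in> B} * prob A"
  using brownian by (simp add: std_brownian_motion_def)

lemma stopping_time_range: "\<tau> \<in> stopping_times \<Longrightarrow> \<omega> \<in> space M \<Longrightarrow> 0 \<le> \<tau> \<omega> \<and> \<tau> \<omega> \<le> T"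
  by (auto simp: stopping_times_0_def)

lemma stopping_time_le_F:
  "\<tau> \<in> stopping_times \<Longrightarrow> 0 \<le> t \<Longrightarrow> t \<le> T \<Longrightarrow> {\<omega>\<in>space M. \<tau> \<omega> \<le> t} \<in> sets (F t)"
  by (auto simp: stopping_times_0_def)

lemma stopping_time_min_F_measurable:
  assumes \<tau>: "\<tau> \<in> stopping_times" and t: "0 \<le> t" "t \<le> T"
  shows "(\<lambda>\<omega>. min (\<tau> \<omega>) t) \<in> borel_measurable (F t)"
  unfolding borel_measurable_iff_le
proof
  fix a
  consider "t \<le> a" | "a < 0" | "0 \<le> a" "a < t" by linarith
  then show "{\<omega> \<in> space (F t). min (\<tau> \<omega>) t \<le> a} \<in> sets (F t)"
  proof cases
    case 1
    then have "{\<omega> \<in> space (F t). min (\<tau> \<omega>) t \<le> a} = space (F t)" by auto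
    then show ?thesis by simp
  next
    case 2
    then have "{\<omega> \<in> space (F t). min (\<tau> \<omega>) t \<le> a} = {}"
      using stopping_time_range[OF \<tau>] space_F[OF t] t by fastforce
    then show ?thesis by (metis sets.empty_sets)
  next
    case 3
    then have "{\<omega> \<in> space (F t). min (\<tau> \<omega>) t \<le> a} = {\<omega>\<in>space M. \<tau> \<omega> \<le> a}"
      using space_F[OF t] by auto
    moreover have "{\<omega>\<in>space M. \<tau> \<omega> \<le> a} \<in> sets (F a)"
      using 3 t by (intro stopping_time_le_F[OF \<tau>]) auto
    ultimately show ?thesis
      using sets_F_mono[of a t] 3 t by auto
  qed
qed

lemma stopping_time_measurable:
  assumes "\<tau> \<in> stopping_times" shows "\<tau> \<in> borel_measurable M"
proof -
  have "(\<lambda>\<omega>. min (\<tau> \<omega>) T) \<in> borel_measurable M"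
    using T_pos by (intro F_measurable_imp_measurable[of T] stopping_time_min_F_measurable assms) auto
  then show ?thesis
    by (rule measurable_cong[THEN iffD1, rotated]) (simp add: stopping_time_range[OF assms])
qed

lemma stopping_time_const: "(\<lambda>_. T) \<in> stopping_times"
proof -
  have sets: "{\<omega>\<in>space M. T \<le> t} \<in> sets (F t)" if t: "0 \<le> t" "t \<le> T" for t
  proof (cases "t = T")
    case True
    then show ?thesis
      using space_F[OF t] sets.top[of "F t"] by simp
  next
    case False
    with t have "{\<omega>\<in>space M. T \<le> t} = {}" by auto
    then show ?thesis by (metis sets.empty_sets)
  qed
  show ?thesis
    unfolding stopping_times_0_def
  proof (intro CollectI conjI ballI)
    show "T \<in> {0..T}"
      using T_pos by simp
  next
    fix t assume "t \<in> {0..T}"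
    then show "{\<omega>\<in>space M. T \<le> t} \<in> sets (F t)"
      by (intro sets) auto
  qed
qed

lemma stopping_time_max:
  assumes "\<tau> \<in> stopping_times" "\<sigma> \<in> stopping_times"
  shows "(\<lambda>\<omega>. max (\<tau> \<omega>) (\<sigma> \<omega>)) \<in> stopping_times"
proof -
  have "{\<omega> \<in> space M. max (\<tau> \<omega>) (\<sigma> \<omega>) \<le> t} = {\<omega>\<in>space M. \<tau> \<omega> \<le> t} \<inter> {\<omega>\<in>space M. \<sigma> \<omega> \<le> t}" for t
    by auto
  then show ?thesis
    using assms unfolding stopping_times_0_def by (auto simp: max_def)
qed

text \<open>Measurability with respect to the stopped sigma-algebra \<open>F_\<tau>\<close>, expressed through the
  filtration: \<open>g\<close> restricted to \<open>{\<tau> \<le> t}\<close> is \<open>F t\<close>-measurable for every \<open>t\<close>.\<close>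

definition F_tau_measurable :: "('a \<Rightarrow> real) \<Rightarrow> ('a \<Rightarrow> real) \<Rightarrow> bool" where
  "F_tau_measurable \<tau> g \<longleftrightarrow>
    (\<forall>t\<in>{0..T}. (\<lambda>\<omega>. g \<omega> * indicator {\<omega>\<in>space M. \<tau> \<omega> \<le> t} \<omega>) \<in> borel_measurable (F t))"

lemma F_tau_measurableD:
  "F_tau_measurable \<tau> g \<Longrightarrow> 0 \<le> t \<Longrightarrow> t \<le> T \<Longrightarrow>
    (\<lambda>\<omega>. g \<omega> * indicator {\<omega>\<in>space M. \<tau> \<omega> \<le> t} \<omega>) \<in> borel_measurable (F t)"
  by (simp add: F_tau_measurable_def)

lemma F_tau_measurableI:
  assumes \<tau>: "\<tau> \<in> stopping_times"
    and h: "\<And>t. 0 \<le> t \<Longrightarrow> t \<le> T \<Longrightarrow> h t \<in> borel_measurable (F t)"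
    and eq: "\<And>t \<omega>. 0 \<le> t \<Longrightarrow> t \<le> T \<Longrightarrow> \<omega> \<in> space M \<Longrightarrow> \<tau> \<omega> \<le> t \<Longrightarrow> g \<omega> = h t \<omega>"
  shows "F_tau_measurable \<tau> g"
  unfolding F_tau_measurable_def
proof
  fix t assume t: "t \<in> {0..T}"
  have "(\<lambda>\<omega>. h t \<omega> * indicator {\<omega>\<in>space M. \<tau> \<omega> \<le> t} \<omega>) \<in> borel_measurable (F t)"
    using h stopping_time_le_F[OF \<tau>] t by (intro borel_measurable_times borel_measurable_indicator) auto
  then show "(\<lambda>\<omega>. g \<omega> * indicator {\<omega>\<in>space M. \<tau> \<omega> \<le> t} \<omega>) \<in> borel_measurable (F t)"
    by (rule measurable_cong[THEN iffD1, rotated]) (use eq t space_F in \<open>auto split: split_indicator\<close>)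
qed

lemma F_tau_measurable_const: "\<tau> \<in> stopping_times \<Longrightarrow> F_tau_measurable \<tau> (\<lambda>_. c)"
  by (rule F_tau_measurableI[where h="\<lambda>_ _. c"]) auto

lemma F_tau_measurable_min:
  assumes \<tau>: "\<tau> \<in> stopping_times" and g: "F_tau_measurable \<tau> g"
  shows "F_tau_measurable \<tau> (\<lambda>\<omega>. min (g \<omega>) c)"
  unfolding F_tau_measurable_def
proof
  fix t assume t: "t \<in> {0..T}"
  have "(\<lambda>\<omega>. c * indicator {\<omega>\<in>space M. \<tau> \<omega> \<le> t} \<omega>) \<in> borel_measurable (F t)"
    using stopping_time_le_F[OF \<tau>] t by (intro borel_measurable_times borel_measurable_indicator) auto
  with F_tau_measurableD[OF g] t
  have "(\<lambda>\<omega>. min (g \<omega> * indicator {\<omega>\<in>space M. \<tau> \<omega> \<le> t} \<omega>) (c * indicator {\<omega>\<in>space M. \<tau> \<omega> \<le> t} \<omega>))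
      \<in> borel_measurable (F t)"
    by (intro borel_measurable_min) auto
  then show "(\<lambda>\<omega>. min (g \<omega>) c * indicator {\<omega>\<in>space M. \<tau> \<omega> \<le> t} \<omega>) \<in> borel_measurable (F t)"
    by (rule measurable_cong[THEN iffD1, rotated]) (simp split: split_indicator)
qed

lemma F_tau_measurable_mono:
  assumes \<rho>: "\<rho> \<in> stopping_times" and le: "\<And>\<omega>. \<omega> \<in> space M \<Longrightarrow> \<tau> \<omega> \<le> \<rho> \<omega>"
    and g: "F_tau_measurable \<tau> g"
  shows "F_tau_measurable \<rho> g"
  unfolding F_tau_measurable_def
proof
  fix t assume t: "t \<in> {0..T}"
  have "(\<lambda>\<omega>. (g \<omega> * indicator {\<omega>\<in>space M. \<tau> \<omega> \<le> t} \<omega>) * indicator {\<omega>\<in>space M. \<rho> \<omega> \<le> t} \<omega>)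
      \<in> borel_measurable (F t)"
  proof (rule borel_measurable_times)
    show "(\<lambda>\<omega>. g \<omega> * indicator {\<omega>\<in>space M. \<tau> \<omega> \<le> t} \<omega>) \<in> borel_measurable (F t)"
      using F_tau_measurableD[OF g] t by auto
    show "indicator {\<omega>\<in>space M. \<rho> \<omega> \<le> t} \<in> borel_measurable (F t)"
      using t by (intro borel_measurable_indicator stopping_time_le_F[OF \<rho>]) auto
  qed
  then show "(\<lambda>\<omega>. g \<omega> * indicator {\<omega>\<in>space M. \<rho> \<omega> \<le> t} \<omega>) \<in> borel_measurable (F t)"
    by (rule measurable_cong[THEN iffD1, rotated])
      (use space_F t in \<open>auto split: split_indicator dest: le\<close>)
qed

lemma F_tau_measurable_if_le:
  assumes \<tau>: "\<tau> \<in> stopping_times" and \<sigma>: "\<sigma> \<in> stopping_times"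
    and [measurable]: "\<phi> \<in> borel_measurable borel"
  shows "F_tau_measurable \<tau> (\<lambda>\<omega>. if \<tau> \<omega> \<le> \<sigma> \<omega> then \<phi> (\<tau> \<omega>) else 0)"
proof (rule F_tau_measurableI[OF \<tau>])
  fix t assume t: "0 \<le> t" "t \<le> T"
  note [measurable] = stopping_time_min_F_measurable[OF \<tau> t] stopping_time_min_F_measurable[OF \<sigma> t]
  show "(\<lambda>\<omega>. if min (\<tau> \<omega>) t \<le> min (\<sigma> \<omega>) t then \<phi> (min (\<tau> \<omega>) t) else 0) \<in> borel_measurable (F t)"
    by measurable
qed auto

lemma F_tau_measurable_imp_measurable:
  assumes \<tau>: "\<tau> \<in> stopping_times" and g: "F_tau_measurable \<tau> g"
  shows "g \<in> borel_measurable M"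
proof -
  have "(\<lambda>\<omega>. g \<omega> * indicator {\<omega>\<in>space M. \<tau> \<omega> \<le> T} \<omega>) \<in> borel_measurable M"
    using F_tau_measurableD[OF g, of T] T_pos by (intro F_measurable_imp_measurable[of T]) auto
  then show ?thesis
    by (rule measurable_cong[THEN iffD1, rotated]) (simp add: stopping_time_range[OF \<tau>])
qed

lemma W_min_dyadic_F_measurable:
  assumes \<tau>: "\<tau> \<in> stopping_times" and t: "0 \<le> t" "t \<le> T"
  shows "(\<lambda>\<omega>. W (min (dyadic_ceil T n (min (\<tau> \<omega>) t)) t) \<omega>) \<in> borel_measurable (F t)"
proof -
  define s where "s j = min (real j * T / 2 ^ n) t" for j :: nat
  have [measurable]: "(\<lambda>\<omega>. min (\<tau> \<omega>) t) \<in> borel_measurable (F t)"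
    by (rule stopping_time_min_F_measurable[OF \<tau> t])
  have [measurable]: "W (s j) \<in> borel_measurable (F t)" for j
    using t T_pos by (intro F_measurable_mono[OF _ _ _ W_F_measurable]) (auto simp: s_def)
  have "(\<lambda>\<omega>. \<Sum>j\<le>2 ^ n. if dyadic_index T n (min (\<tau> \<omega>) t) = j then W (s j) \<omega> else 0)
      \<in> borel_measurable (F t)"
    by measurable
  then show ?thesis
  proof (rule measurable_cong[THEN iffD1, rotated])
    fix \<omega> assume "\<omega> \<in> space (F t)"
    then have "min (\<tau> \<omega>) t \<le> T"
      using stopping_time_range[OF \<tau>] space_F[OF t] t by auto
    then have "dyadic_index T n (min (\<tau> \<omega>) t) \<le> 2 ^ n"
      using T_pos by (intro dyadic_index_le)
    then show "(\<Sum>j\<le>2 ^ n. if dyadic_index T n (min (\<tau> \<omega>) t) = j then W (s j) \<omega> else 0)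
        = W (min (dyadic_ceil T n (min (\<tau> \<omega>) t)) t) \<omega>"
      by (simp add: sum.delta' s_def dyadic_ceil_def)
  qed
qed

lemma W_stopped_F_measurable:
  assumes \<tau>: "\<tau> \<in> stopping_times" and t: "0 \<le> t" "t \<le> T"
  shows "(\<lambda>\<omega>. W (min (\<tau> \<omega>) t) \<omega>) \<in> borel_measurable (F t)"
proof (rule borel_measurable_LIMSEQ_real[OF _ W_min_dyadic_F_measurable[OF \<tau> t]])
  fix \<omega> assume "\<omega> \<in> space (F t)"
  then have \<omega>: "\<omega> \<in> space M" and r: "0 \<le> min (\<tau> \<omega>) t" "min (\<tau> \<omega>) t \<le> T"
    using stopping_time_range[OF \<tau>] space_F[OF t] t by auto
  have lim: "(\<lambda>n. min (dyadic_ceil T n (min (\<tau> \<omega>) t)) t) \<longlonglongrightarrow> min (min (\<tau> \<omega>) t) t"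
    by (intro tendsto_min dyadic_ceil_tendsto[OF T_pos r(1)] tendsto_const)
  have "min (dyadic_ceil T n (min (\<tau> \<omega>) t)) t \<in> {0..T}" for n
    using dyadic_ceil_ge[OF T_pos, of "min (\<tau> \<omega>) t" n] r t by auto
  then have "(\<lambda>n. W (min (dyadic_ceil T n (min (\<tau> \<omega>) t)) t) \<omega>) \<longlonglongrightarrow> W (min (min (\<tau> \<omega>) t) t) \<omega>"
    using continuous_on_tendsto_compose[OF W_continuous[OF \<omega>] lim] r by auto
  then show "(\<lambda>n. W (min (dyadic_ceil T n (min (\<tau> \<omega>) t)) t) \<omega>) \<longlonglongrightarrow> W (min (\<tau> \<omega>) t) \<omega>"
    by simp
qed

lemma F_tau_measurable_stopped_W:
  assumes \<tau>: "\<tau> \<in> stopping_times"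
    and [measurable]: "(\<lambda>(s, w). \<phi> s w) \<in> borel_measurable (borel \<Otimes>\<^sub>M borel)"
  shows "F_tau_measurable \<tau> (\<lambda>\<omega>. \<phi> (\<tau> \<omega>) (W (\<tau> \<omega>) \<omega>))"
proof (rule F_tau_measurableI[OF \<tau>])
  fix t assume t: "0 \<le> t" "t \<le> T"
  note [measurable] = stopping_time_min_F_measurable[OF \<tau> t] W_stopped_F_measurable[OF \<tau> t]
  show "(\<lambda>\<omega>. \<phi> (min (\<tau> \<omega>) t) (W (min (\<tau> \<omega>) t) \<omega>)) \<in> borel_measurable (F t)"
    by measurable
qed auto

lemma W_stopping_time_measurable:
  assumes \<tau>: "\<tau> \<in> stopping_times"
  shows "(\<lambda>\<omega>. W (\<tau> \<omega>) \<omega>) \<in> borel_measurable M"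
proof -
  have "(\<lambda>\<omega>. W (min (\<tau> \<omega>) T) \<omega>) \<in> borel_measurable M"
    using T_pos by (intro F_measurable_imp_measurable[of T] W_stopped_F_measurable[OF \<tau>]) auto
  then show ?thesis
    by (rule measurable_cong[THEN iffD1, rotated]) (simp add: stopping_time_range[OF \<tau>])
qed

lemma W_dyadic_stopping_time_measurable:
  assumes \<tau>: "\<tau> \<in> stopping_times"
  shows "(\<lambda>\<omega>. W (dyadic_ceil T n (\<tau> \<omega>)) \<omega>) \<in> borel_measurable M"
proof -
  have "(\<lambda>\<omega>. W (min (dyadic_ceil T n (min (\<tau> \<omega>) T)) T) \<omega>) \<in> borel_measurable M"
    using T_pos by (intro F_measurable_imp_measurable[of T] W_min_dyadic_F_measurable[OF \<tau>]) auto
  then show ?thesis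
    by (rule measurable_cong[THEN iffD1, rotated])
      (simp add: stopping_time_range[OF \<tau>] dyadic_ceil_le[OF T_pos])
qed

section \<open>The exponential martingale\<close>

lemma nn_integral_mult_increment:
  fixes f :: "real \<Rightarrow> ennreal" and g :: "'a \<Rightarrow> ennreal"
  assumes st: "0 \<le> s" "s < t" "t \<le> T"
    and g: "g \<in> borel_measurable (F s)" and f[measurable]: "f \<in> borel_measurable borel"
  shows "(\<integral>\<^sup>+\<omega>. g \<omega> * f (W t \<omega> - W s \<omega>) \<partial>M) = (\<integral>\<^sup>+\<omega>. g \<omega> \<partial>M) * (\<integral>\<^sup>+\<omega>. f (W t \<omega> - W s \<omega>) \<partial>M)"
proof -
  define X where "X = case_bool g (\<lambda>\<omega>. f (W t \<omega> - W s \<omega>))"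
  have [measurable]: "W t \<in> borel_measurable M" "W s \<in> borel_measurable M"
    "g \<in> borel_measurable M"
    using W_measurable F_measurable_imp_measurable[OF _ _ g] st by auto
  have "indep_set {g -` A \<inter> space M | A. A \<in> sets borel}
      {(\<lambda>\<omega>. f (W t \<omega> - W s \<omega>)) -` B \<inter> space M | B. B \<in> sets borel}"
    unfolding indep_sets2_eq
  proof (safe intro!: measurable_sets[of _ M borel])
    fix A B :: "ennreal set" assume A: "A \<in> sets borel" and B: "B \<in> sets borel"
    have A': "g -` A \<inter> space M \<in> sets (F s)"
      using measurable_sets[OF g A] space_F st by auto
    have B': "f -` B \<in> sets borel"
      using measurable_sets[OF f B] by simp
    let ?G = "g -` A \<inter> space M" and ?D = "{\<omega>\<in>space M. W t \<omega> - W s \<omega> \<in> f -` B}"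
    have "prob (?D \<inter> ?G) = prob ?D * prob ?G"
      by (rule W_increment_indep[OF st A' B'])
    then have "prob (?G \<inter> ?D) = prob ?G * prob ?D"
      by (simp only: Int_commute mult.commute)
    moreover have "(\<lambda>\<omega>. f (W t \<omega> - W s \<omega>)) -` B \<inter> space M = ?D"
      by auto
    ultimately show "prob (?G \<inter> ((\<lambda>\<omega>. f (W t \<omega> - W s \<omega>)) -` B \<inter> space M))
        = prob ?G * prob ((\<lambda>\<omega>. f (W t \<omega> - W s \<omega>)) -` B \<inter> space M)"
      by (simp only:)
  qed (auto intro: measurable_sets)
  then have "indep_sets (\<lambda>i. {X i -` A \<inter> space M | A. A \<in> sets borel}) UNIV"
    unfolding indep_set_def
    by (rule indep_sets_cong[THEN iffD1, OF refl, rotated]) (simp add: X_def split: bool.split)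
  then have "indep_vars (\<lambda>_. borel) X UNIV"
    unfolding indep_vars_def2 by (simp add: X_def split: bool.split)
  then have "(\<integral>\<^sup>+\<omega>. (\<Prod>i\<in>UNIV. X i \<omega>) \<partial>M) = (\<Prod>i\<in>UNIV. \<integral>\<^sup>+\<omega>. X i \<omega> \<partial>M)"
    by (rule indep_vars_nn_integral[OF finite]) auto
  then show ?thesis
    by (simp add: X_def UNIV_bool mult.commute)
qed

lemma nn_integral_exp_increment:
  assumes "0 \<le> s" "s < t" "t \<le> T"
  shows "(\<integral>\<^sup>+\<omega>. ennreal (exp (\<theta> * (W t \<omega> - W s \<omega>))) \<partial>M) = ennreal (exp (\<theta>\<^sup>2 * (t - s) / 2))"
proof -
  have "(\<integral>\<^sup>+\<omega>. ennreal (exp (\<theta> * (W t \<omega> - W s \<omega>))) \<partial>M)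
      = (\<integral>\<^sup>+x. ennreal (normal_density 0 (sqrt (t - s)) x) * ennreal (exp (\<theta> * x)) \<partial>lborel)"
    by (rule distributed_nn_integral[OF W_increment_distributed[OF assms], symmetric]) auto
  also have "\<dots> = ennreal (exp (\<theta>\<^sup>2 * (sqrt (t - s))\<^sup>2 / 2))"
    using assms by (intro nn_integral_normal_density_mult_exp) auto
  finally show ?thesis using assms by simp
qed

definition exp_mart :: "real \<Rightarrow> real \<Rightarrow> 'a \<Rightarrow> real" where
  "exp_mart \<theta> t \<omega> = exp (\<theta> * W t \<omega> - \<theta>\<^sup>2 * t / 2)"

lemma exp_mart_nonneg[simp]: "0 \<le> exp_mart \<theta> t \<omega>"
  by (simp add: exp_mart_def)

lemma exp_mart_square: "(exp_mart \<theta> t \<omega>)\<^sup>2 = exp_mart (2 * \<theta>) t \<omega> * exp (\<theta>\<^sup>2 * t)"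
  unfolding exp_mart_def by (simp add: power2_eq_square exp_add[symmetric] algebra_simps)

lemma exp_mart_F_measurable: "0 \<le> t \<Longrightarrow> t \<le> T \<Longrightarrow> exp_mart \<theta> t \<in> borel_measurable (F t)"
  unfolding exp_mart_def using W_F_measurable by measurable

lemma exp_mart_measurable[measurable]: "exp_mart \<theta> T \<in> borel_measurable M"
  using F_measurable_imp_measurable[OF _ _ exp_mart_F_measurable] T_pos by auto

lemma exp_mart_at_measurable:
  assumes [measurable]: "\<rho> \<in> borel_measurable M" "(\<lambda>\<omega>. W (\<rho> \<omega>) \<omega>) \<in> borel_measurable M"
  shows "(\<lambda>\<omega>. exp_mart \<theta> (\<rho> \<omega>) \<omega>) \<in> borel_measurable M"
  unfolding exp_mart_def by measurable

lemma nn_integral_exp_mart_martingale: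
  fixes g :: "'a \<Rightarrow> ennreal"
  assumes st: "0 \<le> s" "s \<le> t" "t \<le> T" and g[measurable]: "g \<in> borel_measurable (F s)"
  shows "(\<integral>\<^sup>+\<omega>. g \<omega> * exp_mart \<theta> t \<omega> \<partial>M) = (\<integral>\<^sup>+\<omega>. g \<omega> * exp_mart \<theta> s \<omega> \<partial>M)"
proof (cases "s = t")
  case False
  with st have st': "0 \<le> s" "s < t" "t \<le> T" by auto
  have [measurable]: "W t \<in> borel_measurable M" "W s \<in> borel_measurable M"
    using W_measurable st by auto
  define f where "f x = ennreal (exp (- \<theta>\<^sup>2 * (t - s) / 2)) * ennreal (exp (\<theta> * x))" for x
  have [measurable]: "f \<in> borel_measurable borel"
    unfolding f_def by measurable
  have "exp_mart \<theta> t \<omega> = exp_mart \<theta> s \<omega> * (exp (- \<theta>\<^sup>2 * (t - s) / 2) * exp (\<theta> * (W t \<omega> - W s \<omega>)))" for \<omega>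
    unfolding exp_mart_def by (simp add: exp_add[symmetric] field_simps)
  then have "(\<integral>\<^sup>+\<omega>. g \<omega> * exp_mart \<theta> t \<omega> \<partial>M) = (\<integral>\<^sup>+\<omega>. (g \<omega> * exp_mart \<theta> s \<omega>) * f (W t \<omega> - W s \<omega>) \<partial>M)"
    by (simp add: f_def ennreal_mult mult.assoc)
  also have "\<dots> = (\<integral>\<^sup>+\<omega>. g \<omega> * exp_mart \<theta> s \<omega> \<partial>M) * (\<integral>\<^sup>+\<omega>. f (W t \<omega> - W s \<omega>) \<partial>M)"
    using exp_mart_F_measurable[of s \<theta>] st by (intro nn_integral_mult_increment[OF st']) auto
  also have "(\<integral>\<^sup>+\<omega>. f (W t \<omega> - W s \<omega>) \<partial>M)
      = ennreal (exp (- \<theta>\<^sup>2 * (t - s) / 2)) * (\<integral>\<^sup>+\<omega>. ennreal (exp (\<theta> * (W t \<omega> - W s \<omega>))) \<partial>M)"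
    unfolding f_def by (rule nn_integral_cmult) measurable
  also have "\<dots> = 1"
    unfolding nn_integral_exp_increment[OF st'] by (simp add: ennreal_mult[symmetric] exp_add[symmetric])
  finally show ?thesis by simp
qed simp

lemma nn_integral_exp_mart: "(\<integral>\<^sup>+\<omega>. exp_mart \<theta> T \<omega> \<partial>M) = 1"
  using nn_integral_exp_mart_martingale[of 0 T "\<lambda>_. 1" \<theta>] T_pos
  by (simp add: exp_mart_def W_zero emeasure_space_1 cong: nn_integral_cong)

lemma exp_mart_stopped_measurable:
  "\<tau> \<in> stopping_times \<Longrightarrow> (\<lambda>\<omega>. exp_mart \<theta> (\<tau> \<omega>) \<omega>) \<in> borel_measurable M"
  by (intro exp_mart_at_measurable stopping_time_measurable W_stopping_time_measurable)

lemma exp_mart_dyadic_measurable: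
  "\<tau> \<in> stopping_times \<Longrightarrow> (\<lambda>\<omega>. exp_mart \<theta> (dyadic_ceil T n (\<tau> \<omega>)) \<omega>) \<in> borel_measurable M"
  by (intro exp_mart_at_measurable borel_measurable_dyadic_ceil stopping_time_measurable
      W_dyadic_stopping_time_measurable)

section \<open>Optional stopping\<close>

lemma nn_integral_exp_mart_dyadic:
  assumes \<tau>: "\<tau> \<in> stopping_times" and g: "F_tau_measurable \<tau> g"
    and nonneg: "\<And>\<omega>. \<omega> \<in> space M \<Longrightarrow> 0 \<le> g \<omega>"
  shows "(\<integral>\<^sup>+\<omega>. ennreal (g \<omega>) * ennreal (exp_mart \<theta> T \<omega>) \<partial>M)
    = (\<integral>\<^sup>+\<omega>. ennreal (g \<omega>) * ennreal (exp_mart \<theta> (dyadic_ceil T n (\<tau> \<omega>)) \<omega>) \<partial>M)"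
proof -
  define s where "s j = real j * T / 2 ^ n" for j :: nat
  define h where "h j \<omega> = (if dyadic_index T n (\<tau> \<omega>) = j then ennreal (g \<omega>) else 0)" for j \<omega>
  have s: "0 \<le> s j" "s j \<le> T" if "j \<le> 2 ^ n" for j
    using that T_pos by (auto simp: s_def field_simps simp flip: of_nat_le_iff)
  have h_F: "h j \<in> borel_measurable (F (s j))" if j: "j \<le> 2 ^ n" for j
  proof -
    have [measurable]: "(\<lambda>\<omega>. min (\<tau> \<omega>) (s j)) \<in> borel_measurable (F (s j))"
      "(\<lambda>\<omega>. g \<omega> * indicator {\<omega>\<in>space M. \<tau> \<omega> \<le> s j} \<omega>) \<in> borel_measurable (F (s j))"
      using stopping_time_min_F_measurable[OF \<tau>] F_tau_measurableD[OF g] s[OF j] by auto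
    have "(\<lambda>\<omega>. ennreal (if dyadic_index T n (min (\<tau> \<omega>) (s j)) = j
        then g \<omega> * indicator {\<omega>\<in>space M. \<tau> \<omega> \<le> s j} \<omega> else 0)) \<in> borel_measurable (F (s j))"
      by measurable
    then show ?thesis
    proof (rule measurable_cong[THEN iffD1, rotated])
      fix \<omega> assume "\<omega> \<in> space (F (s j))"
      then have \<omega>: "\<omega> \<in> space M" using space_F s[OF j] by auto
      have "\<tau> \<omega> \<le> s j" if "dyadic_index T n (\<tau> \<omega>) = j"
        using that dyadic_ceil_ge[OF T_pos, of "\<tau> \<omega>" n] by (simp add: dyadic_ceil_def s_def)
      then show "ennreal (if dyadic_index T n (min (\<tau> \<omega>) (s j)) = j
          then g \<omega> * indicator {\<omega>\<in>space M. \<tau> \<omega> \<le> s j} \<omega> else 0) = h j \<omega>"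
        using \<omega> by (auto simp: h_def min_def)
    qed
  qed
  have [measurable]: "h j \<in> borel_measurable M" "exp_mart \<theta> (s j) \<in> borel_measurable M"
    if "j \<le> 2 ^ n" for j
    using h_F exp_mart_F_measurable s that F_measurable_imp_measurable by blast+
  have index_le: "dyadic_index T n (\<tau> \<omega>) \<le> 2 ^ n" if "\<omega> \<in> space M" for \<omega>
    using dyadic_index_le[OF T_pos] stopping_time_range[OF \<tau> that] by blast
  have h_mult: "h j \<omega> * x = (if dyadic_index T n (\<tau> \<omega>) = j then ennreal (g \<omega>) * x else 0)" for j \<omega> x
    by (simp add: h_def)
  have "(\<integral>\<^sup>+\<omega>. ennreal (g \<omega>) * ennreal (exp_mart \<theta> T \<omega>) \<partial>M)
      = (\<integral>\<^sup>+\<omega>. (\<Sum>j\<le>2 ^ n. h j \<omega> * ennreal (exp_mart \<theta> T \<omega>)) \<partial>M)"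
    using index_le by (intro nn_integral_cong) (simp add: h_mult)
  also have "\<dots> = (\<Sum>j\<le>2 ^ n. \<integral>\<^sup>+\<omega>. h j \<omega> * ennreal (exp_mart \<theta> T \<omega>) \<partial>M)"
    by (intro nn_integral_sum) measurable
  also have "\<dots> = (\<Sum>j\<le>2 ^ n. \<integral>\<^sup>+\<omega>. h j \<omega> * ennreal (exp_mart \<theta> (s j) \<omega>) \<partial>M)"
    using s h_F by (intro sum.cong refl nn_integral_exp_mart_martingale) auto
  also have "\<dots> = (\<integral>\<^sup>+\<omega>. (\<Sum>j\<le>2 ^ n. h j \<omega> * ennreal (exp_mart \<theta> (s j) \<omega>)) \<partial>M)"
    by (intro nn_integral_sum[symmetric]) measurable
  also have "\<dots> = (\<integral>\<^sup>+\<omega>. ennreal (g \<omega>) * ennreal (exp_mart \<theta> (dyadic_ceil T n (\<tau> \<omega>)) \<omega>) \<partial>M)"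
    using index_le
    by (intro nn_integral_cong) (simp add: h_mult s_def dyadic_ceil_def)
  finally show ?thesis .
qed

lemma nn_integral_exp_mart_dyadic_eq_1:
  assumes \<tau>: "\<tau> \<in> stopping_times"
  shows "(\<integral>\<^sup>+\<omega>. ennreal (exp_mart \<theta> (dyadic_ceil T n (\<tau> \<omega>)) \<omega>) \<partial>M) = 1"
  using nn_integral_exp_mart_dyadic[OF \<tau> F_tau_measurable_const[OF \<tau>], of 1 \<theta> n]
  by (simp add: nn_integral_exp_mart)

lemma nn_integral_square_exp_mart_dyadic_le:
  assumes \<tau>: "\<tau> \<in> stopping_times"
    and nonneg: "\<And>\<omega>. \<omega> \<in> space M \<Longrightarrow> 0 \<le> g \<omega>" and bounded: "\<And>\<omega>. \<omega> \<in> space M \<Longrightarrow> g \<omega> \<le> c"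
  shows "(\<integral>\<^sup>+\<omega>. ennreal ((g \<omega> * exp_mart \<theta> (dyadic_ceil T n (\<tau> \<omega>)) \<omega>)\<^sup>2) \<partial>M)
    \<le> ennreal (c\<^sup>2 * exp (\<theta>\<^sup>2 * T))"
proof -
  note [measurable] = exp_mart_dyadic_measurable[OF \<tau>]
  have "ennreal ((g \<omega> * exp_mart \<theta> (dyadic_ceil T n (\<tau> \<omega>)) \<omega>)\<^sup>2)
      \<le> ennreal (c\<^sup>2 * exp (\<theta>\<^sup>2 * T)) * ennreal (exp_mart (2 * \<theta>) (dyadic_ceil T n (\<tau> \<omega>)) \<omega>)"
    if \<omega>: "\<omega> \<in> space M" for \<omega>
  proof -
    have "dyadic_ceil T n (\<tau> \<omega>) \<le> T"
      using dyadic_ceil_le[OF T_pos] stopping_time_range[OF \<tau> \<omega>] by auto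
    then have "exp (\<theta>\<^sup>2 * dyadic_ceil T n (\<tau> \<omega>)) \<le> exp (\<theta>\<^sup>2 * T)"
      by (simp add: mult_left_mono)
    moreover have "(g \<omega>)\<^sup>2 \<le> c\<^sup>2"
      using nonneg[OF \<omega>] bounded[OF \<omega>] by (intro power_mono) auto
    ultimately have "(g \<omega>)\<^sup>2 * (exp_mart (2 * \<theta>) (dyadic_ceil T n (\<tau> \<omega>)) \<omega> * exp (\<theta>\<^sup>2 * dyadic_ceil T n (\<tau> \<omega>)))
        \<le> c\<^sup>2 * (exp_mart (2 * \<theta>) (dyadic_ceil T n (\<tau> \<omega>)) \<omega> * exp (\<theta>\<^sup>2 * T))"
      by (intro mult_mono mult_left_mono) auto
    then show ?thesis
      unfolding power_mult_distrib exp_mart_square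
      by (simp add: ennreal_mult[symmetric] ennreal_leI ac_simps)
  qed
  then have "(\<integral>\<^sup>+\<omega>. ennreal ((g \<omega> * exp_mart \<theta> (dyadic_ceil T n (\<tau> \<omega>)) \<omega>)\<^sup>2) \<partial>M)
      \<le> (\<integral>\<^sup>+\<omega>. ennreal (c\<^sup>2 * exp (\<theta>\<^sup>2 * T)) * ennreal (exp_mart (2 * \<theta>) (dyadic_ceil T n (\<tau> \<omega>)) \<omega>) \<partial>M)"
    by (intro nn_integral_mono) auto
  also have "\<dots> = ennreal (c\<^sup>2 * exp (\<theta>\<^sup>2 * T))"
    by (simp add: nn_integral_cmult nn_integral_exp_mart_dyadic_eq_1[OF \<tau>])
  finally show ?thesis .
qed

lemma nn_integral_exp_mart_stopped_bounded:
  assumes \<tau>: "\<tau> \<in> stopping_times" and g: "F_tau_measurable \<tau> g"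
    and nonneg: "\<And>\<omega>. \<omega> \<in> space M \<Longrightarrow> 0 \<le> g \<omega>" and bounded: "\<And>\<omega>. \<omega> \<in> space M \<Longrightarrow> g \<omega> \<le> c"
  shows "(\<integral>\<^sup>+\<omega>. ennreal (g \<omega>) * ennreal (exp_mart \<theta> T \<omega>) \<partial>M)
    = (\<integral>\<^sup>+\<omega>. ennreal (g \<omega>) * ennreal (exp_mart \<theta> (\<tau> \<omega>) \<omega>) \<partial>M)"
proof -
  define f where "f n \<omega> = g \<omega> * exp_mart \<theta> (dyadic_ceil T n (\<tau> \<omega>)) \<omega>" for n \<omega>
  note [measurable] = F_tau_measurable_imp_measurable[OF \<tau> g]
    exp_mart_stopped_measurable[OF \<tau>] exp_mart_dyadic_measurable[OF \<tau>]
  have "(\<integral>\<^sup>+\<omega>. ennreal (g \<omega> * exp_mart \<theta> (\<tau> \<omega>) \<omega>) \<partial>M)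
      = (\<integral>\<^sup>+\<omega>. ennreal (g \<omega>) * ennreal (exp_mart \<theta> T \<omega>) \<partial>M)"
  proof (rule nn_integral_eq_of_tendsto_L2_bounded)
    show "f n \<in> borel_measurable M" for n
      unfolding f_def by measurable
    show "(\<lambda>\<omega>. g \<omega> * exp_mart \<theta> (\<tau> \<omega>) \<omega>) \<in> borel_measurable M"
      by measurable
    show "0 \<le> f n \<omega>" if "\<omega> \<in> space M" for n \<omega>
      using nonneg[OF that] by (simp add: f_def)
    show "(\<lambda>n. f n \<omega>) \<longlonglongrightarrow> g \<omega> * exp_mart \<theta> (\<tau> \<omega>) \<omega>" if \<omega>: "\<omega> \<in> space M" for \<omega>
    proof -
      have r: "0 \<le> \<tau> \<omega>" "\<tau> \<omega> \<le> T" using stopping_time_range[OF \<tau> \<omega>] by auto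
      have "dyadic_ceil T n (\<tau> \<omega>) \<in> {0..T}" for n
        using dyadic_ceil_ge[OF T_pos, of "\<tau> \<omega>" n] dyadic_ceil_le[OF T_pos r(2)] r by auto
      then have "(\<lambda>n. W (dyadic_ceil T n (\<tau> \<omega>)) \<omega>) \<longlonglongrightarrow> W (\<tau> \<omega>) \<omega>"
        using continuous_on_tendsto_compose[OF W_continuous[OF \<omega>] dyadic_ceil_tendsto[OF T_pos r(1)]] r
        by auto
      then show ?thesis
        unfolding f_def exp_mart_def by (intro tendsto_intros dyadic_ceil_tendsto[OF T_pos r(1)]) simp_all
    qed
    show "(\<integral>\<^sup>+\<omega>. ennreal ((f n \<omega>)\<^sup>2) \<partial>M) \<le> ennreal (c\<^sup>2 * exp (\<theta>\<^sup>2 * T))" for n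
      unfolding f_def by (rule nn_integral_square_exp_mart_dyadic_le[OF \<tau> nonneg bounded])
    show "(\<integral>\<^sup>+\<omega>. ennreal (f n \<omega>) \<partial>M) = (\<integral>\<^sup>+\<omega>. ennreal (g \<omega>) * ennreal (exp_mart \<theta> T \<omega>) \<partial>M)" for n
      using nn_integral_exp_mart_dyadic[OF \<tau> g nonneg]
      by (simp add: f_def ennreal_mult nonneg cong: nn_integral_cong)
  qed
  then show ?thesis
    by (simp add: ennreal_mult nonneg cong: nn_integral_cong)
qed

theorem nn_integral_exp_mart_stopped:
  assumes \<tau>: "\<tau> \<in> stopping_times" and g: "F_tau_measurable \<tau> g"
    and nonneg: "\<And>\<omega>. \<omega> \<in> space M \<Longrightarrow> 0 \<le> g \<omega>"
  shows "(\<integral>\<^sup>+\<omega>. ennreal (g \<omega>) * ennreal (exp_mart \<theta> T \<omega>) \<partial>M)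
    = (\<integral>\<^sup>+\<omega>. ennreal (g \<omega>) * ennreal (exp_mart \<theta> (\<tau> \<omega>) \<omega>) \<partial>M)"
proof -
  have [measurable]: "g \<in> borel_measurable M" "\<tau> \<in> borel_measurable M"
    "(\<lambda>\<omega>. W (\<tau> \<omega>) \<omega>) \<in> borel_measurable M"
    using F_tau_measurable_imp_measurable[OF \<tau> g] stopping_time_measurable[OF \<tau>]
      W_stopping_time_measurable[OF \<tau>] by auto
  have trunc: "(\<lambda>k. \<integral>\<^sup>+\<omega>. ennreal (min (g \<omega>) (real k)) * ennreal (X \<omega>) \<partial>M)
      \<longlonglongrightarrow> (\<integral>\<^sup>+\<omega>. ennreal (g \<omega>) * ennreal (X \<omega>) \<partial>M)"
    if [measurable]: "X \<in> borel_measurable M" for X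
  proof (rule nn_integral_LIMSEQ)
    show "incseq (\<lambda>k \<omega>. ennreal (min (g \<omega>) (real k)) * ennreal (X \<omega>))"
      by (auto simp: incseq_def le_fun_def intro!: mult_right_mono ennreal_leI)
    show "(\<lambda>k. ennreal (min (g \<omega>) (real k)) * ennreal (X \<omega>)) \<longlonglongrightarrow> ennreal (g \<omega>) * ennreal (X \<omega>)" for \<omega>
      by (intro tendsto_mult_ennreal tendsto_ennrealI tendsto_min_of_nat tendsto_const) auto
  qed measurable
  have "(\<integral>\<^sup>+\<omega>. ennreal (min (g \<omega>) (real k)) * ennreal (exp_mart \<theta> T \<omega>) \<partial>M)
      = (\<integral>\<^sup>+\<omega>. ennreal (min (g \<omega>) (real k)) * ennreal (exp_mart \<theta> (\<tau> \<omega>) \<omega>) \<partial>M)" for k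
    using nonneg
    by (intro nn_integral_exp_mart_stopped_bounded[OF \<tau> F_tau_measurable_min[OF \<tau> g], where c="real k"]) auto
  with trunc[of "exp_mart \<theta> T"] trunc[of "\<lambda>\<omega>. exp_mart \<theta> (\<tau> \<omega>) \<omega>"]
  show ?thesis
    using exp_mart_stopped_measurable[OF \<tau>] by (auto intro: LIMSEQ_unique)
qed

lemma nn_integral_exp_mart_stopped_mono:
  assumes \<tau>: "\<tau> \<in> stopping_times" and \<rho>: "\<rho> \<in> stopping_times"
    and le: "\<And>\<omega>. \<omega> \<in> space M \<Longrightarrow> \<tau> \<omega> \<le> \<rho> \<omega>"
    and g: "F_tau_measurable \<tau> g" and nonneg: "\<And>\<omega>. \<omega> \<in> space M \<Longrightarrow> 0 \<le> g \<omega>"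
  shows "(\<integral>\<^sup>+\<omega>. ennreal (g \<omega> * exp_mart \<theta> (\<rho> \<omega>) \<omega>) \<partial>M)
    = (\<integral>\<^sup>+\<omega>. ennreal (g \<omega> * exp_mart \<theta> (\<tau> \<omega>) \<omega>) \<partial>M)"
  using nn_integral_exp_mart_stopped[OF \<rho> F_tau_measurable_mono[OF \<rho> le g] nonneg, of \<theta>]
    nn_integral_exp_mart_stopped[OF \<tau> g nonneg, of \<theta>]
  by (simp add: ennreal_mult nonneg cong: nn_integral_cong)

corollary nn_integral_exp_mart_stopped_eq_1:
  "\<tau> \<in> stopping_times \<Longrightarrow> (\<integral>\<^sup>+\<omega>. ennreal (exp_mart \<theta> (\<tau> \<omega>) \<omega>) \<partial>M) = 1"
  using nn_integral_exp_mart_stopped[OF _ F_tau_measurable_const, of \<tau> 1 \<theta>]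
  by (simp add: nn_integral_exp_mart)

section \<open>Optimal stopping for buyer and seller\<close>

lemma util_B_le_util_B_maturity:
  assumes \<alpha>: "0 < \<alpha>" and \<mu>: "\<alpha> / 2 < \<mu>" and \<delta>: "0 \<le> \<delta>"
    and \<sigma>: "\<sigma> \<in> stopping_times" and \<tau>: "\<tau> \<in> stopping_times"
  defines "X \<equiv> \<lambda>t \<omega>. W t \<omega> + \<mu> * t" and "Y \<equiv> \<lambda>t \<omega>. W t \<omega> + \<mu> * t + \<delta>"
  shows "util_B M \<alpha> (\<lambda>\<omega>. 0) X Y \<tau> \<sigma> \<le> util_B M \<alpha> (\<lambda>\<omega>. 0) X Y (\<lambda>\<omega>. T) \<sigma>"
proof -
  define k where "k = \<alpha> * \<mu> - \<alpha>\<^sup>2 / 2"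
  define \<rho> where "\<rho> \<omega> = max (\<tau> \<omega>) (\<sigma> \<omega>)" for \<omega>
  define g where "g \<omega> = (if \<tau> \<omega> \<le> \<sigma> \<omega> then exp (- k * \<tau> \<omega>) else 0)" for \<omega>
  define early where "early \<omega> = (if \<sigma> \<omega> < \<tau> \<omega> then exp (- \<alpha> * Y (\<sigma> \<omega>) \<omega>) else 0)" for \<omega>
  have "\<alpha> * (\<alpha> / 2) < \<alpha> * \<mu>"
    using \<alpha> \<mu> by simp
  then have k: "0 < k"
    by (simp add: k_def power2_eq_square)
  have \<rho>: "\<rho> \<in> stopping_times"
    unfolding \<rho>_def by (rule stopping_time_max[OF \<tau> \<sigma>])
  have exp_X: "exp (- \<alpha> * X t \<omega>) = exp_mart (- \<alpha>) t \<omega> * exp (- k * t)" for t \<omega>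
    unfolding exp_mart_def X_def k_def by (simp add: exp_add[symmetric] field_simps power2_eq_square)
  have exp_Y: "exp (- \<alpha> * Y t \<omega>) \<le> exp (- \<alpha> * X t \<omega>)" for t \<omega>
    using \<alpha> \<delta> by (simp add: X_def Y_def)
  have g_nonneg: "0 \<le> g \<omega>" for \<omega>
    by (simp add: g_def)
  have "(\<lambda>s. exp (- k * s)) \<in> borel_measurable borel"
    by measurable
  from F_tau_measurable_if_le[OF \<tau> \<sigma> this] have g_F: "F_tau_measurable \<tau> g"
    unfolding g_def[abs_def] .
  have payoff_maturity: "exp (- \<alpha> * (0 + payoff X Y (\<lambda>\<omega>. T) \<sigma> \<omega>)) \<le> early \<omega> + g \<omega> * exp_mart (- \<alpha>) (\<rho> \<omega>) \<omega>"
    if \<omega>: "\<omega> \<in> space M" for \<omega>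
  proof (cases "\<tau> \<omega> \<le> \<sigma> \<omega>")
    case True
    have "exp (- \<alpha> * payoff X Y (\<lambda>\<omega>. T) \<sigma> \<omega>) \<le> exp (- \<alpha> * X (\<sigma> \<omega>) \<omega>)"
      using stopping_time_range[OF \<sigma> \<omega>] exp_Y by (auto simp: payoff_def)
    also have "\<dots> \<le> exp_mart (- \<alpha>) (\<sigma> \<omega>) \<omega> * exp (- k * \<tau> \<omega>)"
      unfolding exp_X using True k by (intro mult_left_mono) auto
    finally show ?thesis
      using True by (simp add: early_def g_def \<rho>_def max_absorb2 mult.commute)
  next
    case False
    then show ?thesis
      using stopping_time_range[OF \<tau> \<omega>] by (simp add: payoff_def early_def g_def)
  qed
  have payoff_\<tau>: "exp (- \<alpha> * (0 + payoff X Y \<tau> \<sigma> \<omega>)) = early \<omega> + g \<omega> * exp_mart (- \<alpha>) (\<tau> \<omega>) \<omega>" for \<omega>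
    using exp_X[of "\<tau> \<omega>" \<omega>] by (simp add: payoff_def early_def g_def mult.commute)
  note [measurable] = stopping_time_measurable[OF \<tau>] stopping_time_measurable[OF \<sigma>]
    W_stopping_time_measurable[OF \<sigma>]
    exp_mart_stopped_measurable[OF \<tau>] exp_mart_stopped_measurable[OF \<rho>]
    F_tau_measurable_imp_measurable[OF \<tau> g_F]
  have meas: "early \<in> borel_measurable M"
    "(\<lambda>\<omega>. g \<omega> * exp_mart (- \<alpha>) (\<rho> \<omega>) \<omega>) \<in> borel_measurable M"
    "(\<lambda>\<omega>. g \<omega> * exp_mart (- \<alpha>) (\<tau> \<omega>) \<omega>) \<in> borel_measurable M"
    unfolding early_def Y_def by measurable
  have "(\<integral>\<^sup>+\<omega>. ennreal (exp (- \<alpha> * (0 + payoff X Y (\<lambda>\<omega>. T) \<sigma> \<omega>))) \<partial>M)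
      \<le> (\<integral>\<^sup>+\<omega>. ennreal (exp (- \<alpha> * (0 + payoff X Y \<tau> \<sigma> \<omega>))) \<partial>M)"
  proof (rule nn_integral_mono_decomposition[where a=early
        and b="\<lambda>\<omega>. g \<omega> * exp_mart (- \<alpha>) (\<rho> \<omega>) \<omega>" and c="\<lambda>\<omega>. g \<omega> * exp_mart (- \<alpha>) (\<tau> \<omega>) \<omega>"])
    show "(\<integral>\<^sup>+\<omega>. ennreal (g \<omega> * exp_mart (- \<alpha>) (\<rho> \<omega>) \<omega>) \<partial>M)
        = (\<integral>\<^sup>+\<omega>. ennreal (g \<omega> * exp_mart (- \<alpha>) (\<tau> \<omega>) \<omega>) \<partial>M)"
      by (rule nn_integral_exp_mart_stopped_mono[OF \<tau> \<rho> _ g_F g_nonneg]) (simp add: \<rho>_def)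
    show "early \<omega> + g \<omega> * exp_mart (- \<alpha>) (\<tau> \<omega>) \<omega> \<le> exp (- \<alpha> * (0 + payoff X Y \<tau> \<sigma> \<omega>))" for \<omega>
      by (simp only: payoff_\<tau> order_refl)
  qed (use meas payoff_maturity in \<open>auto simp: early_def g_nonneg\<close>)
  then show ?thesis
    by (simp add: util_B_def less_eq_ennreal.rep_eq)
qed

lemma util_A_le_util_A_stop_at_0:
  assumes \<alpha>: "0 < \<alpha>" and \<mu>: "0 \<le> \<mu>" and \<delta>: "\<delta> < (\<alpha> / 2 + \<mu>) * T" and \<sigma>: "\<sigma> \<in> stopping_times"
  defines "X \<equiv> \<lambda>t \<omega>. W t \<omega> + \<mu> * t" and "Y \<equiv> \<lambda>t \<omega>. W t \<omega> + \<mu> * t + \<delta>"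
  shows "util_A M \<alpha> (\<lambda>\<omega>. 0) X Y (\<lambda>\<omega>. T) \<sigma> \<le> util_A M \<alpha> (\<lambda>\<omega>. 0) X Y (\<lambda>\<omega>. T) (\<lambda>\<omega>. 0)"
proof -
  define k where "k = \<alpha>\<^sup>2 / 2 + \<alpha> * \<mu>"
  have k: "0 \<le> k" using \<alpha> \<mu> by (simp add: k_def)
  have "\<alpha> * \<delta> \<le> \<alpha> * ((\<alpha> / 2 + \<mu>) * T)"
    using \<alpha> \<delta> by simp
  then have \<delta>_k: "\<alpha> * \<delta> \<le> k * T"
    by (simp add: k_def power2_eq_square algebra_simps)
  have exp_X: "exp (\<alpha> * X t \<omega>) = exp_mart \<alpha> t \<omega> * exp (k * t)" for t \<omega>
    unfolding exp_mart_def X_def k_def by (simp add: exp_add[symmetric] field_simps power2_eq_square)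
  have bound: "exp (\<alpha> * \<delta>) * exp_mart \<alpha> (\<sigma> \<omega>) \<omega> \<le> exp (- \<alpha> * (0 - payoff X Y (\<lambda>\<omega>. T) \<sigma> \<omega>))"
    if \<omega>: "\<omega> \<in> space M" for \<omega>
  proof (cases "\<sigma> \<omega> < T")
    case True
    have "1 \<le> exp (k * \<sigma> \<omega>)"
      using k stopping_time_range[OF \<sigma> \<omega>] by simp
    from mult_left_mono[OF this exp_mart_nonneg]
    have "exp (\<alpha> * \<delta>) * exp_mart \<alpha> (\<sigma> \<omega>) \<omega> \<le> exp (\<alpha> * \<delta>) * (exp_mart \<alpha> (\<sigma> \<omega>) \<omega> * exp (k * \<sigma> \<omega>))"
      by (intro mult_left_mono) auto
    also have "\<dots> = exp (\<alpha> * Y (\<sigma> \<omega>) \<omega>)"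
      unfolding exp_X[symmetric] exp_add[symmetric] by (simp add: X_def Y_def algebra_simps)
    finally show ?thesis
      using True by (simp add: payoff_def)
  next
    case False
    then have "\<sigma> \<omega> = T"
      using stopping_time_range[OF \<sigma> \<omega>] by simp
    moreover have "exp (\<alpha> * \<delta>) * exp_mart \<alpha> T \<omega> \<le> exp (k * T) * exp_mart \<alpha> T \<omega>"
      using \<delta>_k by (intro mult_right_mono) auto
    ultimately show ?thesis
      by (simp add: payoff_def exp_X mult.commute)
  qed
  have "(\<integral>\<^sup>+\<omega>. ennreal (exp (- \<alpha> * (0 - payoff X Y (\<lambda>\<omega>. T) (\<lambda>\<omega>. 0) \<omega>))) \<partial>M) = ennreal (exp (\<alpha> * \<delta>))"
    using T_pos by (simp add: payoff_def Y_def W_zero emeasure_space_1 cong: nn_integral_cong)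
  also have "\<dots> = (\<integral>\<^sup>+\<omega>. ennreal (exp (\<alpha> * \<delta>)) * ennreal (exp_mart \<alpha> (\<sigma> \<omega>) \<omega>) \<partial>M)"
    using exp_mart_stopped_measurable[OF \<sigma>]
    by (simp add: nn_integral_cmult nn_integral_exp_mart_stopped_eq_1[OF \<sigma>])
  also have "\<dots> \<le> (\<integral>\<^sup>+\<omega>. ennreal (exp (- \<alpha> * (0 - payoff X Y (\<lambda>\<omega>. T) \<sigma> \<omega>))) \<partial>M)"
    using bound by (intro nn_integral_mono) (simp add: ennreal_mult[symmetric] ennreal_leI)
  finally show ?thesis
    by (simp add: util_A_def less_eq_ennreal.rep_eq)
qed

lemma util_A_hedged_le_util_A_maturity:
  assumes \<alpha>: "0 < \<alpha>" and \<mu>: "\<mu> < \<alpha> / 2" and \<delta>: "0 \<le> \<delta>" and \<sigma>: "\<sigma> \<in> stopping_times"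
  defines "X \<equiv> \<lambda>t \<omega>. W t \<omega> + \<mu> * t" and "Y \<equiv> \<lambda>t \<omega>. W t \<omega> + \<mu> * t + \<delta>"
  shows "util_A M \<alpha> (X T) X Y (\<lambda>\<omega>. T) \<sigma> \<le> util_A M \<alpha> (X T) X Y (\<lambda>\<omega>. T) (\<lambda>\<omega>. T)"
proof -
  define g where "g \<omega> = (if \<sigma> \<omega> < T
    then exp (\<alpha> * \<delta> + \<alpha> * W (\<sigma> \<omega>) \<omega> + \<alpha>\<^sup>2 * T / 2 - \<alpha> * \<mu> * (T - \<sigma> \<omega>)) else 0)" for \<omega>
  define late where "late \<omega> = (if \<sigma> \<omega> < T then 0 else 1 :: real)" for \<omega>
  have g_nonneg: "0 \<le> g \<omega>" for \<omega>
    by (simp add: g_def)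
  have "(\<lambda>(s, w). if s < T then exp (\<alpha> * \<delta> + \<alpha> * w + \<alpha>\<^sup>2 * T / 2 - \<alpha> * \<mu> * (T - s)) else 0)
      \<in> borel_measurable (borel \<Otimes>\<^sub>M borel)"
    by measurable
  from F_tau_measurable_stopped_W[OF \<sigma> this] have g_F: "F_tau_measurable \<sigma> g"
    unfolding g_def[abs_def] .
  have loss: "exp (- \<alpha> * (X T \<omega> - payoff X Y (\<lambda>\<omega>. T) \<sigma> \<omega>)) = late \<omega> + g \<omega> * exp_mart (- \<alpha>) T \<omega>"
    if \<omega>: "\<omega> \<in> space M" for \<omega>
    using stopping_time_range[OF \<sigma> \<omega>]
    by (auto simp: payoff_def late_def g_def exp_mart_def X_def Y_def exp_add[symmetric]
        field_simps power2_eq_square)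
  have early_bound: "1 - late \<omega> \<le> g \<omega> * exp_mart (- \<alpha>) (\<sigma> \<omega>) \<omega>" for \<omega>
  proof (cases "\<sigma> \<omega> < T")
    case True
    have "0 \<le> \<alpha> * \<delta> + \<alpha> * (\<alpha> / 2 - \<mu>) * (T - \<sigma> \<omega>)"
      using \<alpha> \<mu> \<delta> True by (intro add_nonneg_nonneg mult_nonneg_nonneg) auto
    then show ?thesis
      using True by (simp add: late_def g_def exp_mart_def exp_add[symmetric] field_simps power2_eq_square)
  qed (simp add: late_def g_nonneg)
  note [measurable] = stopping_time_measurable[OF \<sigma>] W_stopping_time_measurable[OF \<sigma>]
    exp_mart_stopped_measurable[OF \<sigma>] F_tau_measurable_imp_measurable[OF \<sigma> g_F]
  have meas: "late \<in> borel_measurable M"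
    "(\<lambda>\<omega>. g \<omega> * exp_mart (- \<alpha>) (\<sigma> \<omega>) \<omega>) \<in> borel_measurable M"
    "(\<lambda>\<omega>. g \<omega> * exp_mart (- \<alpha>) T \<omega>) \<in> borel_measurable M"
    unfolding late_def by measurable
  have "(\<integral>\<^sup>+\<omega>. ennreal (exp (- \<alpha> * (X T \<omega> - payoff X Y (\<lambda>\<omega>. T) (\<lambda>\<omega>. T) \<omega>))) \<partial>M)
      \<le> (\<integral>\<^sup>+\<omega>. ennreal (exp (- \<alpha> * (X T \<omega> - payoff X Y (\<lambda>\<omega>. T) \<sigma> \<omega>))) \<partial>M)"
  proof (rule nn_integral_mono_decomposition[where a=late
        and b="\<lambda>\<omega>. g \<omega> * exp_mart (- \<alpha>) (\<sigma> \<omega>) \<omega>" and c="\<lambda>\<omega>. g \<omega> * exp_mart (- \<alpha>) T \<omega>"])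
    show "(\<integral>\<^sup>+\<omega>. ennreal (g \<omega> * exp_mart (- \<alpha>) (\<sigma> \<omega>) \<omega>) \<partial>M)
        = (\<integral>\<^sup>+\<omega>. ennreal (g \<omega> * exp_mart (- \<alpha>) T \<omega>) \<partial>M)"
      by (rule nn_integral_exp_mart_stopped_mono[OF \<sigma> stopping_time_const _ g_F g_nonneg, symmetric])
        (simp add: stopping_time_range[OF \<sigma>])
    show "exp (- \<alpha> * (X T \<omega> - payoff X Y (\<lambda>\<omega>. T) (\<lambda>\<omega>. T) \<omega>)) \<le> late \<omega> + g \<omega> * exp_mart (- \<alpha>) (\<sigma> \<omega>) \<omega>"
      for \<omega>
      using early_bound[of \<omega>] by (simp add: payoff_def)
    show "late \<omega> + g \<omega> * exp_mart (- \<alpha>) T \<omega> \<le> exp (- \<alpha> * (X T \<omega> - payoff X Y (\<lambda>\<omega>. T) \<sigma> \<omega>))"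
      if "\<omega> \<in> space M" for \<omega>
      by (simp only: loss[OF that] order_refl)
  qed (use meas in \<open>auto simp: late_def g_nonneg\<close>)
  then show ?thesis
    by (simp add: util_A_def less_eq_ennreal.rep_eq)
qed

end

theorem mainTheorem11:
  fixes M :: "'a measure" and F :: "real \<Rightarrow> 'a measure" and T :: real
    and W :: "real \<Rightarrow> 'a \<Rightarrow> real"
    and \<alpha>A \<alpha>B \<mu> \<delta> :: real
  assumes fps: "filtered_prob_space_usual M F T"
    and BM: "std_brownian_motion M F T W"
    and aA: "\<alpha>A > 0" and aB: "\<alpha>B > 0"
    and mu_nn: "\<mu> \<ge> 0" and delta_nn: "\<delta> \<ge> 0"
    and mu_lo: "\<alpha>B / 2 < \<mu>" and mu_hi: "\<mu> < \<alpha>A / 2"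
    and delta_lo: "0 < \<delta>" and delta_hi: "\<delta> < (\<alpha>A / 2 + \<mu>) * T"
  defines "X \<equiv> (\<lambda>t \<omega>. W t \<omega> + \<mu> * t)"
    and "Y \<equiv> (\<lambda>t \<omega>. W t \<omega> + \<mu> * t + \<delta>)"
  shows
    "(\<forall>\<sigma>\<in>stopping_times_0 M F T. \<forall>\<tau>\<in>stopping_times_0 M F T.
        util_B M \<alpha>B (\<lambda>\<omega>. 0) X Y \<tau> \<sigma> \<le> util_B M \<alpha>B (\<lambda>\<omega>. 0) X Y (\<lambda>\<omega>. T) \<sigma>)
     \<and> (\<forall>\<sigma>\<in>stopping_times_0 M F T.
        util_A M \<alpha>A (\<lambda>\<omega>. 0) X Y (\<lambda>\<omega>. T) \<sigma> \<le> util_A M \<alpha>A (\<lambda>\<omega>. 0) X Y (\<lambda>\<omega>. T) (\<lambda>\<omega>. 0))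
     \<and> (\<forall>\<sigma>\<in>stopping_times_0 M F T.
        util_A M \<alpha>A (\<lambda>\<omega>. W T \<omega> + \<mu> * T) X Y (\<lambda>\<omega>. T) \<sigma>
          \<le> util_A M \<alpha>A (\<lambda>\<omega>. W T \<omega> + \<mu> * T) X Y (\<lambda>\<omega>. T) (\<lambda>\<omega>. T))"
proof -
  interpret brownian_filtration M F T W
    by (rule brownian_filtration.intro[OF fps BM])
  show ?thesis
    unfolding X_def Y_def
    using util_B_le_util_B_maturity[OF aB mu_lo delta_nn]
      util_A_le_util_A_stop_at_0[OF aA mu_nn delta_hi]
      util_A_hedged_le_util_A_maturity[OF aA mu_hi delta_nn]
    by blast
qed

end
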